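(* Let $A$ be a Prüfer domain with Noetherian prime spectrum (for example, a Dedekind domain), and let $B$ be an overring of $A$ finitely generated as an $A$-algebra. The following are equivalent: (1) $B$ is a localization of $A$; (2) $B$ is well-centered on $A$; (3) $B$ is almost well-centered on $A$.
   Context: For an integral domain $A$ with field of fractions $K$, an overring is a subring $B$ of $K$ containing $A$. $B$ is a localization of $A$ if $B=S^{-1}A$ for a multiplicatively closed set $S$ of nonzero elements of $A$. $B$ is well-centered on $A$ if for each $b\in B$ there is a unit $u$ of $B$ with $ub\in A$; $B$ is almost well-centered on $A$ if for each $b\in B$ there exist a positive integer $n$ and a unit $u$ of $B$ with $ub^n\in A$. *)

theory Defs
  imports Main
begin

text \<open>We work inside a field K (type 'k). An integral domain A is represented as a
subring of K whose field of fractions is K; overrings are subrings B with A \<subseteq> B \<subseteq> K.\<close>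

definition is_subring :: "'k::field set \<Rightarrow> bool" where
  "is_subring R \<longleftrightarrow> 0 \<in> R \<and> 1 \<in> R \<and>
     (\<forall>x\<in>R. \<forall>y\<in>R. x + y \<in> R \<and> x - y \<in> R \<and> x * y \<in> R)"

definition frac_field_of :: "'k::field set \<Rightarrow> bool" where
  "frac_field_of A \<longleftrightarrow> is_subring A \<and>
     (\<forall>x::'k. \<exists>a\<in>A. \<exists>b\<in>A. b \<noteq> 0 \<and> x = a / b)"

definition is_overring :: "'k::field set \<Rightarrow> 'k set \<Rightarrow> bool" where
  "is_overring A B \<longleftrightarrow> is_subring B \<and> A \<subseteq> B"

definition mod_span :: "'k::field set \<Rightarrow> 'k set \<Rightarrow> 'k set" where
  "mod_span A S = {x. \<exists>F c. finite F \<and> F \<subseteq> S \<and> (\<forall>s\<in>F. c s \<in> A) \<and>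
                          x = (\<Sum>s\<in>F. c s * s)}"

definition frac_mult :: "'k::field set \<Rightarrow> 'k set \<Rightarrow> 'k set \<Rightarrow> 'k set" where
  "frac_mult A I J = mod_span A {x * y | x y. x \<in> I \<and> y \<in> J}"

definition colon :: "'k::field set \<Rightarrow> 'k set \<Rightarrow> 'k set" where
  "colon A I = {x. \<forall>y\<in>I. x * y \<in> A}"

definition invertible_ideal :: "'k::field set \<Rightarrow> 'k set \<Rightarrow> bool" where
  "invertible_ideal A I \<longleftrightarrow> frac_mult A I (colon A I) = A"

definition pruefer :: "'k::field set \<Rightarrow> bool" where
  "pruefer A \<longleftrightarrow> (\<forall>F. finite F \<and> F \<subseteq> A \<and> F - {0} \<noteq> {} \<longrightarrow>
                        invertible_ideal A (mod_span A F))"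

definition is_ideal :: "'k::field set \<Rightarrow> 'k set \<Rightarrow> bool" where
  "is_ideal A I \<longleftrightarrow> I \<subseteq> A \<and> 0 \<in> I \<and> (\<forall>x\<in>I. \<forall>y\<in>I. x + y \<in> I) \<and>
                     (\<forall>a\<in>A. \<forall>x\<in>I. a * x \<in> I)"

definition radical_ideal :: "'k::field set \<Rightarrow> 'k set \<Rightarrow> bool" where
  "radical_ideal A I \<longleftrightarrow> is_ideal A I \<and> (\<forall>x\<in>A. \<forall>n::nat. x ^ n \<in> I \<longrightarrow> x \<in> I)"

text \<open>Noetherian prime spectrum: Spec A is a Noetherian topological space, i.e.
  DCC on closed subsets, i.e. ACC on radical ideals.\<close>
definition noetherian_spectrum :: "'k::field set \<Rightarrow> bool" where
  "noetherian_spectrum A \<longleftrightarrow>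
     (\<forall>f::nat \<Rightarrow> 'k set. (\<forall>n. radical_ideal A (f n)) \<and> (\<forall>n. f n \<subseteq> f (Suc n)) \<longrightarrow>
        (\<exists>N. \<forall>n\<ge>N. f n = f N))"

definition ring_gen :: "'k::field set \<Rightarrow> 'k set" where
  "ring_gen S = \<Inter>{R. is_subring R \<and> S \<subseteq> R}"

definition fin_gen_algebra :: "'k::field set \<Rightarrow> 'k set \<Rightarrow> bool" where
  "fin_gen_algebra A B \<longleftrightarrow> (\<exists>F. finite F \<and> F \<subseteq> B \<and> B = ring_gen (A \<union> F))"

definition is_localization :: "'k::field set \<Rightarrow> 'k set \<Rightarrow> bool" where
  "is_localization A B \<longleftrightarrow> (\<exists>S. S \<subseteq> A - {0} \<and> 1 \<in> S \<and> (\<forall>s\<in>S. \<forall>t\<in>S. s * t \<in> S) \<and>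
                              B = {a / s | a s. a \<in> A \<and> s \<in> S})"

definition ring_unit :: "'k::field set \<Rightarrow> 'k \<Rightarrow> bool" where
  "ring_unit B u \<longleftrightarrow> u \<in> B \<and> u \<noteq> 0 \<and> inverse u \<in> B"

definition well_centered :: "'k::field set \<Rightarrow> 'k set \<Rightarrow> bool" where
  "well_centered A B \<longleftrightarrow> (\<forall>b\<in>B. \<exists>u. ring_unit B u \<and> u * b \<in> A)"

definition almost_well_centered :: "'k::field set \<Rightarrow> 'k set \<Rightarrow> bool" where
  "almost_well_centered A B \<longleftrightarrow>
     (\<forall>b\<in>B. \<exists>n::nat. \<exists>u. n > 0 \<and> ring_unit B u \<and> u * b ^ n \<in> A)"

end

theory Submission
  imports Defs
begin

(* Write x in A_P when s x in A for some s in A - P.  Since A is Pruefer, every x has d, e in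
   its denominator ideal with d + e x = 1, so x not in A_P yields q in P with q x in A - P.
   Since Spec A is Noetherian, every ideal has finitely many minimal primes.  Over each minimal
   prime of the intersection of the denominator ideals of y and z at most one exponent k makes
   y + z^k local, so some y + z^k is non-local wherever y or z is.  Folding this over the
   finitely many generators of B gives b in B that is non-local at every prime P with B not
   contained in A_P.  Now let u b^n in A with u a unit of B.  For such P, for q in P with
   q b in A - P and for s in A with s u in A, the product (s u) (q b)^n = s q^n (u b^n) lies
   in P, hence s u in P.  This forces u in A and, for each x in B, u^k x in A for some k;
   so B is the localization of A at the elements of A that are units of B. *)

section \<open>Subrings, submodules and ideals\<close>

lemma subring_0: "is_subring R \<Longrightarrow> 0 \<in> R"
  by (simp add: is_subring_def)

lemma subring_1: "is_subring R \<Longrightarrow> 1 \<in> R"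
  by (simp add: is_subring_def)

lemma subring_add: "is_subring R \<Longrightarrow> x \<in> R \<Longrightarrow> y \<in> R \<Longrightarrow> x + y \<in> R"
  by (simp add: is_subring_def)

lemma subring_diff: "is_subring R \<Longrightarrow> x \<in> R \<Longrightarrow> y \<in> R \<Longrightarrow> x - y \<in> R"
  by (simp add: is_subring_def)

lemma subring_mult: "is_subring R \<Longrightarrow> x \<in> R \<Longrightarrow> y \<in> R \<Longrightarrow> x * y \<in> R"
  by (simp add: is_subring_def)

lemma subring_power: "is_subring R \<Longrightarrow> x \<in> R \<Longrightarrow> x ^ n \<in> R"
  by (induction n) (auto intro: subring_mult subring_1)

lemma subring_of_nat: "is_subring R \<Longrightarrow> of_nat n \<in> R"
  by (induction n) (auto intro: subring_add subring_1 subring_0)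

lemma ring_gen_least: "is_subring R \<Longrightarrow> S \<subseteq> R \<Longrightarrow> ring_gen S \<subseteq> R"
  unfolding ring_gen_def by blast

definition is_submodule :: "'k::field set \<Rightarrow> 'k set \<Rightarrow> bool" where
  "is_submodule A W \<longleftrightarrow> 0 \<in> W \<and> (\<forall>x\<in>W. \<forall>y\<in>W. x + y \<in> W) \<and> (\<forall>a\<in>A. \<forall>x\<in>W. a * x \<in> W)"

lemma submodule_sum:
  assumes "is_submodule A W" and "\<And>i. i \<in> S \<Longrightarrow> f i \<in> W"
  shows "sum f S \<in> W"
  using assms(2) by (induction S rule: infinite_finite_induct) (use assms(1) in \<open>auto simp: is_submodule_def\<close>)

lemma mod_span_least:
  assumes W: "is_submodule A W" and S: "S \<subseteq> W"
  shows "mod_span A S \<subseteq> W"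
proof
  fix x assume "x \<in> mod_span A S"
  then obtain F c where "F \<subseteq> S" "\<forall>s\<in>F. c s \<in> A" "x = (\<Sum>s\<in>F. c s * s)"
    unfolding mod_span_def by blast
  with S W show "x \<in> W"
    by (auto intro!: submodule_sum[OF W] simp: is_submodule_def)
qed

lemma mod_span_gen: "is_subring A \<Longrightarrow> x \<in> S \<Longrightarrow> x \<in> mod_span A S"
  unfolding mod_span_def
  by (intro CollectI exI[of _ "{x}"] exI[of _ "\<lambda>_. 1"]) (auto simp: subring_1)

lemma ideal_iff_submodule: "is_ideal A I \<longleftrightarrow> I \<subseteq> A \<and> is_submodule A I"
  by (auto simp: is_ideal_def is_submodule_def)

lemma ideal_subset: "is_ideal A I \<Longrightarrow> x \<in> I \<Longrightarrow> x \<in> A"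
  by (auto simp: is_ideal_def)

lemma ideal_0: "is_ideal A I \<Longrightarrow> 0 \<in> I"
  by (simp add: is_ideal_def)

lemma ideal_add: "is_ideal A I \<Longrightarrow> x \<in> I \<Longrightarrow> y \<in> I \<Longrightarrow> x + y \<in> I"
  by (simp add: is_ideal_def)

lemma ideal_mult_left: "is_ideal A I \<Longrightarrow> a \<in> A \<Longrightarrow> x \<in> I \<Longrightarrow> a * x \<in> I"
  by (simp add: is_ideal_def)

lemma ideal_mult_right: "is_ideal A I \<Longrightarrow> a \<in> A \<Longrightarrow> x \<in> I \<Longrightarrow> x * a \<in> I"
  using ideal_mult_left[of A I a x] by (simp add: mult.commute)

lemma ideal_power_mono:
  assumes "is_subring A" "is_ideal A I" "x \<in> A" "x ^ m \<in> I" "m \<le> n"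
  shows "x ^ n \<in> I"
proof -
  have "x ^ n = x ^ (n - m) * x ^ m"
    using assms(5) by (simp flip: power_add)
  then show ?thesis
    using assms by (metis ideal_mult_left subring_power)
qed

lemma ideal_Int: "is_ideal A I \<Longrightarrow> is_ideal A J \<Longrightarrow> is_ideal A (I \<inter> J)"
  unfolding is_ideal_def by blast

section \<open>Prime and radical ideals\<close>

definition prime_ideal :: "'k::field set \<Rightarrow> 'k set \<Rightarrow> bool" where
  "prime_ideal A P \<longleftrightarrow> is_ideal A P \<and> 1 \<notin> P \<and> (\<forall>a\<in>A. \<forall>b\<in>A. a * b \<in> P \<longrightarrow> a \<in> P \<or> b \<in> P)"

lemma prime_ideal_mult_notin:
  "prime_ideal A P \<Longrightarrow> a \<in> A \<Longrightarrow> b \<in> A \<Longrightarrow> a \<notin> P \<Longrightarrow> b \<notin> P \<Longrightarrow> a * b \<notin> P"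
  by (auto simp: prime_ideal_def)

lemma prime_ideal_power_notin:
  assumes "is_subring A" "prime_ideal A P" "a \<in> A" "a \<notin> P"
  shows "a ^ n \<notin> P"
proof (induction n)
  case 0
  then show ?case using assms(2) by (simp add: prime_ideal_def)
next
  case (Suc n)
  then show ?case
    using prime_ideal_mult_notin[OF assms(2,3) subring_power[OF assms(1,3)] assms(4)] by simp
qed

definition rad :: "'k::field set \<Rightarrow> 'k set \<Rightarrow> 'k set" where
  "rad A I = {x \<in> A. \<exists>m. x ^ m \<in> I}"

lemma ideal_subset_rad: "is_ideal A I \<Longrightarrow> I \<subseteq> rad A I"
  by (auto simp: rad_def ideal_subset intro: exI[of _ 1])

lemma rad_subset_prime:
  assumes "is_subring A" "prime_ideal A P" "I \<subseteq> P"
  shows "rad A I \<subseteq> P"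
  using prime_ideal_power_notin[OF assms(1,2)] assms(3) by (auto simp: rad_def)

lemma rad_add:
  assumes A: "is_subring A" and I: "is_ideal A I" and x: "x \<in> rad A I" and y: "y \<in> rad A I"
  shows "x + y \<in> rad A I"
proof -
  obtain m l where xA: "x \<in> A" and m: "x ^ m \<in> I" and yA: "y \<in> A" and l: "y ^ l \<in> I"
    using x y by (auto simp: rad_def)
  have "(x + y) ^ (m + l) = (\<Sum>k\<le>m+l. of_nat ((m + l) choose k) * x ^ k * y ^ (m + l - k))"
    by (rule binomial_ring)
  also have "\<dots> \<in> I"
  proof (rule submodule_sum)
    show "is_submodule A I" using I by (simp add: ideal_iff_submodule)
    fix k
    have c: "of_nat ((m + l) choose k) \<in> A" using subring_of_nat[OF A] .
    show "of_nat ((m + l) choose k) * x ^ k * y ^ (m + l - k) \<in> I"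
    proof (cases "m \<le> k")
      case True
      then have "x ^ k \<in> I" using ideal_power_mono[OF A I xA m] by simp
      then show ?thesis
        using c by (intro ideal_mult_right[OF I] ideal_mult_left[OF I] subring_power[OF A yA])
    next
      case False
      then have "y ^ (m + l - k) \<in> I" using ideal_power_mono[OF A I yA l] by simp
      then show ?thesis
        using c by (intro ideal_mult_left[OF I] subring_mult[OF A] subring_power[OF A xA])
    qed
  qed
  finally show ?thesis using xA yA subring_add[OF A] by (auto simp: rad_def)
qed

lemma radical_ideal_rad:
  assumes A: "is_subring A" and I: "is_ideal A I"
  shows "radical_ideal A (rad A I)"
proof -
  have mult: "a * x \<in> rad A I" if a: "a \<in> A" and x: "x \<in> rad A I" for a x
  proof -
    obtain m where xA: "x \<in> A" and m: "x ^ m \<in> I" using x by (auto simp: rad_def)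
    have "(a * x) ^ m = a ^ m * x ^ m" by (simp add: power_mult_distrib)
    then have "(a * x) ^ m \<in> I" using ideal_mult_left[OF I subring_power[OF A a] m] by simp
    then show ?thesis using subring_mult[OF A a xA] by (auto simp: rad_def)
  qed
  have radical: "x \<in> rad A I" if "x \<in> A" "x ^ n \<in> rad A I" for x n
  proof -
    from that(2) obtain m where "(x ^ n) ^ m \<in> I" unfolding rad_def by blast
    then show ?thesis using that(1) by (auto simp: rad_def power_mult[symmetric])
  qed
  have "0 \<in> rad A I" using ideal_0[OF I] subring_0[OF A] by (auto simp: rad_def intro!: exI[of _ 1])
  then show ?thesis
    unfolding radical_ideal_def is_ideal_def using rad_add[OF A I] mult radical by (auto simp: rad_def)
qed

definition ideal_adjoin :: "'k::field set \<Rightarrow> 'k set \<Rightarrow> 'k \<Rightarrow> 'k set" where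
  "ideal_adjoin A M a = {m + a * r | m r. m \<in> M \<and> r \<in> A}"

lemma ideal_adjoin_ideal:
  assumes A: "is_subring A" and M: "is_ideal A M" and a: "a \<in> A"
  shows "is_ideal A (ideal_adjoin A M a)" and "M \<subseteq> ideal_adjoin A M a" and "a \<in> ideal_adjoin A M a"
proof -
  show "M \<subseteq> ideal_adjoin A M a"
    unfolding ideal_adjoin_def using subring_0[OF A] by force
  show "a \<in> ideal_adjoin A M a"
    unfolding ideal_adjoin_def using ideal_0[OF M] subring_1[OF A] by force
  show "is_ideal A (ideal_adjoin A M a)"
    unfolding is_ideal_def
  proof (intro conjI ballI)
    show "ideal_adjoin A M a \<subseteq> A"
      unfolding ideal_adjoin_def
      using a ideal_subset[OF M] by (auto intro!: subring_add[OF A] subring_mult[OF A])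
    show "0 \<in> ideal_adjoin A M a"
      using \<open>M \<subseteq> ideal_adjoin A M a\<close> ideal_0[OF M] by blast
  next
    fix x y assume "x \<in> ideal_adjoin A M a" "y \<in> ideal_adjoin A M a"
    then obtain m r m' r' where "m \<in> M" "r \<in> A" "x = m + a * r" "m' \<in> M" "r' \<in> A" "y = m' + a * r'"
      unfolding ideal_adjoin_def by blast
    then show "x + y \<in> ideal_adjoin A M a"
      unfolding ideal_adjoin_def
      by (intro CollectI exI[of _ "m + m'"] exI[of _ "r + r'"])
        (auto simp: algebra_simps intro: ideal_add[OF M] subring_add[OF A])
  next
    fix c x assume c: "c \<in> A" and "x \<in> ideal_adjoin A M a"
    then obtain m r where "m \<in> M" "r \<in> A" "x = m + a * r"
      unfolding ideal_adjoin_def by blast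
    with c show "c * x \<in> ideal_adjoin A M a"
      unfolding ideal_adjoin_def
      by (intro CollectI exI[of _ "c * m"] exI[of _ "c * r"])
        (auto simp: algebra_simps intro: ideal_mult_left[OF M] subring_mult[OF A])
  qed
qed

lemma ideal_adjoin_mult:
  assumes A: "is_subring A" and M: "is_ideal A M" and a: "a \<in> A" and b: "b \<in> A"
    and ab: "a * b \<in> M" and x: "x \<in> ideal_adjoin A M a" and y: "y \<in> ideal_adjoin A M b"
  shows "x * y \<in> M"
proof -
  obtain m r where m: "m \<in> M" "r \<in> A" "x = m + a * r"
    using x by (auto simp: ideal_adjoin_def)
  obtain m' r' where m': "m' \<in> M" "r' \<in> A" "y = m' + b * r'"
    using y by (auto simp: ideal_adjoin_def)
  have yA: "y \<in> A" using ideal_subset[OF ideal_adjoin_ideal(1)[OF A M b] y] .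
  have "x * y = m * y + (a * r) * m' + (a * b) * (r * r')"
    using m m' by (simp add: algebra_simps)
  then show ?thesis
    using m m' ab yA a by (metis ideal_add[OF M] ideal_mult_left[OF M] ideal_mult_right[OF M] subring_mult[OF A])
qed

lemma rad_adjoin_Int:
  assumes A: "is_subring A" and M: "radical_ideal A M"
    and a: "a \<in> A" and b: "b \<in> A" and ab: "a * b \<in> M"
  shows "rad A (ideal_adjoin A M a) \<inter> rad A (ideal_adjoin A M b) = M"
proof
  have Mi: "is_ideal A M" using M by (simp add: radical_ideal_def)
  show "M \<subseteq> rad A (ideal_adjoin A M a) \<inter> rad A (ideal_adjoin A M b)"
    using ideal_adjoin_ideal[OF A Mi a] ideal_adjoin_ideal[OF A Mi b] ideal_subset_rad by blast
  show "rad A (ideal_adjoin A M a) \<inter> rad A (ideal_adjoin A M b) \<subseteq> M"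
  proof
    fix x assume "x \<in> rad A (ideal_adjoin A M a) \<inter> rad A (ideal_adjoin A M b)"
    then obtain m l where x: "x \<in> A" "x ^ m \<in> ideal_adjoin A M a" "x ^ l \<in> ideal_adjoin A M b"
      by (auto simp: rad_def)
    then have "x ^ (m + l) \<in> M"
      using ideal_adjoin_mult[OF A Mi a b ab] by (simp add: power_add)
    then show "x \<in> M" using M x(1) by (auto simp: radical_ideal_def)
  qed
qed

section \<open>Rings with Noetherian spectrum\<close>

lemma noetherian_spectrum_maximal:
  assumes N: "noetherian_spectrum A" and ne: "\<F> \<noteq> {}" and rad: "\<forall>J\<in>\<F>. radical_ideal A J"
  shows "\<exists>M\<in>\<F>. \<forall>J\<in>\<F>. M \<subseteq> J \<longrightarrow> J = M"
proof (rule ccontr)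
  assume "\<not> ?thesis"
  then have "\<exists>f. \<forall>n. f n \<in> \<F> \<and> f n \<subset> f (Suc n)"
    using ne by (intro dependent_nat_choice[where P = "\<lambda>_ M. M \<in> \<F>" and Q = "\<lambda>_ M J. M \<subset> J"]) auto
  then obtain f where f: "\<forall>n. f n \<in> \<F> \<and> f n \<subset> f (Suc n)" by blast
  moreover have "\<exists>N. \<forall>n\<ge>N. f n = f N"
    using N rad f unfolding noetherian_spectrum_def by (simp add: less_imp_le)
  ultimately show False by (metis le_SucI order_refl less_irrefl)
qed

lemma radical_ideal_eq_Inter_primes:
  assumes A: "is_subring A" and N: "noetherian_spectrum A" and J: "radical_ideal A J"
  shows "\<exists>Ps. finite Ps \<and> (\<forall>P\<in>Ps. prime_ideal A P) \<and> J = A \<inter> \<Inter>Ps"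
proof (rule ccontr)
  define repr where "repr J \<longleftrightarrow> (\<exists>Ps. finite Ps \<and> (\<forall>P\<in>Ps. prime_ideal A P) \<and> J = A \<inter> \<Inter>Ps)" for J
  assume "\<not> ?thesis"
  then have "{J. radical_ideal A J \<and> \<not> repr J} \<noteq> {}"
    using J by (auto simp: repr_def)
  then obtain M where M: "radical_ideal A M" "\<not> repr M"
    and max: "\<And>J. radical_ideal A J \<Longrightarrow> M \<subseteq> J \<Longrightarrow> J \<noteq> M \<Longrightarrow> repr J"
    using noetherian_spectrum_maximal[OF N, of "{J. radical_ideal A J \<and> \<not> repr J}"] by blast
  have Mi: "is_ideal A M" using M(1) by (simp add: radical_ideal_def)
  have "1 \<notin> M"
  proof
    assume "1 \<in> M"
    then have "M = A" using ideal_mult_right[OF Mi] ideal_subset[OF Mi] by fastforce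
    then have "repr M" unfolding repr_def by (intro exI[of _ "{}"]) auto
    with M(2) show False ..
  qed
  moreover have "\<not> prime_ideal A M"
  proof
    assume "prime_ideal A M"
    then have "repr M" unfolding repr_def using ideal_subset[OF Mi] by (intro exI[of _ "{M}"]) auto
    with M(2) show False ..
  qed
  ultimately obtain a b where ab: "a \<in> A" "b \<in> A" "a * b \<in> M" "a \<notin> M" "b \<notin> M"
    using Mi unfolding prime_ideal_def by blast
  have larger: "repr (rad A (ideal_adjoin A M c))" if "c \<in> A" "c \<notin> M" for c
    using max[OF radical_ideal_rad[OF A ideal_adjoin_ideal(1)[OF A Mi]]] ideal_adjoin_ideal[OF A Mi]
      ideal_subset_rad[OF ideal_adjoin_ideal(1)[OF A Mi]] that by blast
  obtain Pa Pb where "finite Pa" "\<forall>P\<in>Pa. prime_ideal A P" "rad A (ideal_adjoin A M a) = A \<inter> \<Inter>Pa"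
    and "finite Pb" "\<forall>P\<in>Pb. prime_ideal A P" "rad A (ideal_adjoin A M b) = A \<inter> \<Inter>Pb"
    using larger[OF ab(1,4)] larger[OF ab(2,5)] unfolding repr_def by blast
  moreover have "M = rad A (ideal_adjoin A M a) \<inter> rad A (ideal_adjoin A M b)"
    using rad_adjoin_Int[OF A M(1) ab(1-3)] ..
  ultimately have "repr M" unfolding repr_def by (intro exI[of _ "Pa \<union> Pb"]) auto
  with M(2) show False ..
qed

lemma prime_ideal_avoiding:
  assumes A: "is_subring A" and N: "noetherian_spectrum A" and I: "is_ideal A I"
    and v: "v \<in> A" and powers: "\<forall>k. v ^ k \<notin> I"
  shows "\<exists>P. prime_ideal A P \<and> I \<subseteq> P \<and> v \<notin> P"
proof -
  obtain Ps where Ps: "\<forall>P\<in>Ps. prime_ideal A P" and eq: "rad A I = A \<inter> \<Inter>Ps"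
    using radical_ideal_eq_Inter_primes[OF A N radical_ideal_rad[OF A I]] by blast
  have "v \<notin> rad A I" using powers by (simp add: rad_def)
  then obtain P where "P \<in> Ps" "v \<notin> P" using eq v by blast
  moreover have "I \<subseteq> P" using ideal_subset_rad[OF I] eq \<open>P \<in> Ps\<close> by blast
  ultimately show ?thesis using Ps by blast
qed

lemma prime_contains_Inter_primes:
  assumes A: "is_subring A" and Q: "prime_ideal A Q" and fin: "finite Ps"
    and Ps: "\<forall>P\<in>Ps. prime_ideal A P" and sub: "A \<inter> \<Inter>Ps \<subseteq> Q"
  shows "\<exists>P\<in>Ps. P \<subseteq> Q"
proof (rule ccontr)
  assume "\<not> ?thesis"
  then have "\<forall>P\<in>Ps. \<exists>p\<in>P. p \<notin> Q" by blast
  with fin Ps have "\<exists>x\<in>A \<inter> \<Inter>Ps. x \<notin> Q"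
  proof (induction Ps rule: finite_induct)
    case empty
    then show ?case using subring_1[OF A] Q by (auto simp: prime_ideal_def)
  next
    case (insert P Ps)
    then obtain x p where x: "x \<in> A \<inter> \<Inter>Ps" "x \<notin> Q" and p: "p \<in> P" "p \<notin> Q" by auto
    have PI: "is_ideal A P" and PsI: "\<forall>P'\<in>Ps. is_ideal A P'"
      using insert.prems(1) by (auto simp: prime_ideal_def)
    have pA: "p \<in> A" using ideal_subset[OF PI p(1)] .
    have "x * p \<in> A \<inter> \<Inter>(insert P Ps)"
      using x p pA subring_mult[OF A] ideal_mult_left[OF PI] PsI ideal_mult_right by blast
    moreover have "x * p \<notin> Q" using prime_ideal_mult_notin[OF Q] x p pA by blast
    ultimately show ?case by blast
  qed
  with sub show False by blast
qed

lemma finite_minimal_primes: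
  assumes A: "is_subring A" and N: "noetherian_spectrum A" and I: "is_ideal A I"
  shows "\<exists>Ps. finite Ps \<and> (\<forall>P\<in>Ps. prime_ideal A P \<and> I \<subseteq> P)
           \<and> (\<forall>Q. prime_ideal A Q \<and> I \<subseteq> Q \<longrightarrow> (\<exists>P\<in>Ps. P \<subseteq> Q))"
proof -
  obtain Ps where Ps: "finite Ps" "\<forall>P\<in>Ps. prime_ideal A P" and eq: "rad A I = A \<inter> \<Inter>Ps"
    using radical_ideal_eq_Inter_primes[OF A N radical_ideal_rad[OF A I]] by blast
  have "I \<subseteq> P" if "P \<in> Ps" for P
    using ideal_subset_rad[OF I] eq that by blast
  moreover have "\<exists>P\<in>Ps. P \<subseteq> Q" if "prime_ideal A Q" "I \<subseteq> Q" for Q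
  proof -
    have "A \<inter> \<Inter>Ps \<subseteq> Q" using rad_subset_prime[OF A that] eq by blast
    then show ?thesis using prime_contains_Inter_primes[OF A that(1) Ps] by blast
  qed
  ultimately show ?thesis using Ps by (intro exI[of _ Ps]) auto
qed

section \<open>Localization at a prime ideal\<close>

definition denom_ideal :: "'k::field set \<Rightarrow> 'k \<Rightarrow> 'k set" where
  "denom_ideal A x = {d \<in> A. d * x \<in> A}"

definition in_localization :: "'k::field set \<Rightarrow> 'k set \<Rightarrow> 'k \<Rightarrow> bool" where
  "in_localization A P x \<longleftrightarrow> (\<exists>s\<in>A. s \<notin> P \<and> s * x \<in> A)"

lemma in_localization_iff_denom_ideal: "in_localization A P x \<longleftrightarrow> \<not> denom_ideal A x \<subseteq> P"
  by (auto simp: in_localization_def denom_ideal_def)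

lemma denom_ideal_ideal: "is_subring A \<Longrightarrow> is_ideal A (denom_ideal A x)"
  unfolding is_ideal_def denom_ideal_def
  by (auto simp: distrib_right mult.assoc intro: subring_0 subring_add subring_mult)

lemma in_localization_of_mem:
  "is_subring A \<Longrightarrow> prime_ideal A P \<Longrightarrow> x \<in> A \<Longrightarrow> in_localization A P x"
  unfolding in_localization_def prime_ideal_def using subring_1 by fastforce

lemma in_localization_antimono: "P \<subseteq> Q \<Longrightarrow> in_localization A Q x \<Longrightarrow> in_localization A P x"
  unfolding in_localization_def by blast

lemma subring_localization:
  assumes A: "is_subring A" and P: "prime_ideal A P"
  shows "is_subring {x. in_localization A P x}"
proof -
  have closed: "in_localization A P (x + y) \<and> in_localization A P (x - y) \<and> in_localization A P (x * y)"
    if x: "in_localization A P x" and y: "in_localization A P y" for x y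
  proof -
    obtain s t where s: "s \<in> A" "s \<notin> P" "s * x \<in> A" and t: "t \<in> A" "t \<notin> P" "t * y \<in> A"
      using x y unfolding in_localization_def by blast
    have st: "s * t \<in> A" "s * t \<notin> P"
      using subring_mult[OF A] prime_ideal_mult_notin[OF P] s t by auto
    have "s * t * (x + y) = t * (s * x) + s * (t * y)"
      and "s * t * (x - y) = t * (s * x) - s * (t * y)"
      and "s * t * (x * y) = (s * x) * (t * y)"
      by (simp_all add: algebra_simps)
    then have "s * t * (x + y) \<in> A" "s * t * (x - y) \<in> A" "s * t * (x * y) \<in> A"
      using s t by (metis subring_add[OF A] subring_diff[OF A] subring_mult[OF A])+
    with st show ?thesis unfolding in_localization_def by blast
  qed
  show ?thesis
    unfolding is_subring_def
    using closed in_localization_of_mem[OF A P] subring_0[OF A] subring_1[OF A] by auto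
qed

lemma Int_denom_ideal_subset_prime_iff:
  assumes A: "is_subring A" and Q: "prime_ideal A Q"
  shows "denom_ideal A y \<inter> denom_ideal A z \<subseteq> Q
    \<longleftrightarrow> \<not> in_localization A Q y \<or> \<not> in_localization A Q z"
proof
  assume sub: "denom_ideal A y \<inter> denom_ideal A z \<subseteq> Q"
  show "\<not> in_localization A Q y \<or> \<not> in_localization A Q z"
  proof (rule ccontr)
    assume "\<not> ?thesis"
    then obtain s t where s: "s \<in> denom_ideal A y" "s \<notin> Q" and t: "t \<in> denom_ideal A z" "t \<notin> Q"
      unfolding in_localization_iff_denom_ideal by blast
    have "s \<in> A" "t \<in> A" using s t by (auto simp: denom_ideal_def)
    then have "s * t \<in> denom_ideal A y \<inter> denom_ideal A z"
      using ideal_mult_right[OF denom_ideal_ideal[OF A]] ideal_mult_left[OF denom_ideal_ideal[OF A]] s t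
      by blast
    with sub prime_ideal_mult_notin[OF Q \<open>s \<in> A\<close> \<open>t \<in> A\<close> s(2) t(2)] show False by blast
  qed
qed (auto simp: in_localization_iff_denom_ideal)

section \<open>Localizations and well-centered overrings\<close>

lemma localization_imp_well_centered:
  assumes A: "is_subring A" and L: "is_localization A B"
  shows "well_centered A B"
  unfolding well_centered_def
proof
  fix b assume "b \<in> B"
  obtain S where S: "S \<subseteq> A - {0}" "1 \<in> S" and B_eq: "B = {a / s | a s. a \<in> A \<and> s \<in> S}"
    using L unfolding is_localization_def by blast
  then obtain a s where a: "a \<in> A" and s: "s \<in> S" and b_eq: "b = a / s" using \<open>b \<in> B\<close> by blast
  have s0: "s \<noteq> 0" and sA: "s \<in> A" using S s by auto
  have "s \<in> B" unfolding B_eq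
    by (rule CollectI, rule exI[of _ s], rule exI[of _ 1]) (simp add: sA S(2))
  moreover have "inverse s \<in> B" unfolding B_eq
    by (rule CollectI, rule exI[of _ 1], rule exI[of _ s]) (simp add: s subring_1[OF A] divide_inverse)
  ultimately have "ring_unit B s" using s0 by (simp add: ring_unit_def)
  moreover have "s * b \<in> A" using a s0 b_eq by simp
  ultimately show "\<exists>u. ring_unit B u \<and> u * b \<in> A" by blast
qed

lemma well_centered_imp_almost_well_centered:
  assumes "well_centered A B"
  shows "almost_well_centered A B"
  unfolding almost_well_centered_def
proof
  fix b assume "b \<in> B"
  with assms obtain u where "ring_unit B u" "u * b \<in> A" unfolding well_centered_def by blast
  then show "\<exists>n::nat. \<exists>u. 0 < n \<and> ring_unit B u \<and> u * b ^ n \<in> A"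
    by (intro exI[of _ "1::nat"] exI[of _ u]) simp
qed

lemma localization_if_invertible_denominators:
  assumes A: "is_subring A" and B: "is_subring B" and AB: "A \<subseteq> B"
    and den: "\<forall>x\<in>B. \<exists>t\<in>A. t \<noteq> 0 \<and> inverse t \<in> B \<and> t * x \<in> A"
  shows "is_localization A B"
proof -
  define S where "S = {t \<in> A. t \<noteq> 0 \<and> inverse t \<in> B}"
  have "B = {a / s | a s. a \<in> A \<and> s \<in> S}"
  proof
    show "B \<subseteq> {a / s | a s. a \<in> A \<and> s \<in> S}"
    proof
      fix x assume "x \<in> B"
      then obtain t where t: "t \<in> S" "t * x \<in> A" using den unfolding S_def by blast
      then have "x = (t * x) / t" by (simp add: S_def)
      with t show "x \<in> {a / s | a s. a \<in> A \<and> s \<in> S}" by blast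
    qed
    show "{a / s | a s. a \<in> A \<and> s \<in> S} \<subseteq> B"
    proof clarify
      fix a s assume "a \<in> A" "s \<in> S"
      then show "a / s \<in> B"
        unfolding S_def divide_inverse using AB subring_mult[OF B] by blast
    qed
  qed
  moreover have "s * t \<in> S" if "s \<in> S" "t \<in> S" for s t
    using that subring_mult[OF A] subring_mult[OF B] unfolding S_def by (simp add: inverse_mult_distrib)
  moreover have "S \<subseteq> A - {0}" "1 \<in> S"
    using subring_1[OF A] subring_1[OF B] unfolding S_def by auto
  ultimately show ?thesis unfolding is_localization_def by blast
qed

section \<open>Pruefer domains\<close>

lemma submodule_denom_ideal_combinations:
  assumes A: "is_subring A"
  shows "is_submodule A {d + e * x | d e. d \<in> denom_ideal A x \<and> e \<in> denom_ideal A x}"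
    (is "is_submodule A ?W")
proof -
  have D: "is_ideal A (denom_ideal A x)" using denom_ideal_ideal[OF A] .
  have mem: "d + e * x \<in> ?W" if "d \<in> denom_ideal A x" "e \<in> denom_ideal A x" for d e
    using that by blast
  show ?thesis
    unfolding is_submodule_def
  proof (intro conjI ballI)
    show "0 \<in> ?W" using mem[OF ideal_0[OF D] ideal_0[OF D]] by simp
  next
    fix w w' assume "w \<in> ?W" "w' \<in> ?W"
    then obtain d e d' e' where "d \<in> denom_ideal A x" "e \<in> denom_ideal A x" "w = d + e * x"
      and "d' \<in> denom_ideal A x" "e' \<in> denom_ideal A x" "w' = d' + e' * x"
      by blast
    then show "w + w' \<in> ?W"
      using mem[OF ideal_add[OF D] ideal_add[OF D]] by (simp add: algebra_simps)
  next
    fix c w assume c: "c \<in> A" and "w \<in> ?W"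
    then obtain d e where de: "d \<in> denom_ideal A x" "e \<in> denom_ideal A x" and "w = d + e * x"
      by blast
    then have "c * w = c * d + (c * e) * x" by (simp add: algebra_simps)
    then show "c * w \<in> ?W"
      using mem[OF ideal_mult_left[OF D c de(1)] ideal_mult_left[OF D c de(2)]] by simp
  qed
qed

lemma pruefer_denom_ideal_decomposition:
  assumes FA: "frac_field_of A" and PA: "pruefer A"
  shows "\<exists>d\<in>denom_ideal A x. \<exists>e\<in>denom_ideal A x. d + e * x = 1"
proof -
  have A: "is_subring A" using FA by (simp add: frac_field_of_def)
  have D: "is_ideal A (denom_ideal A x)" using denom_ideal_ideal[OF A] .
  obtain a b where a: "a \<in> A" and b: "b \<in> A" and b0: "b \<noteq> 0" and x: "x = a / b"
    using FA unfolding frac_field_of_def by blast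
  define I where "I = mod_span A {a, b}"
  define W where "W = {d + e * x | d e. d \<in> denom_ideal A x \<and> e \<in> denom_ideal A x}"
  have mem: "d + e * x \<in> W" if "d \<in> denom_ideal A x" "e \<in> denom_ideal A x" for d e
    using that unfolding W_def by blast
  have W: "is_submodule A W"
    unfolding W_def by (rule submodule_denom_ideal_combinations[OF A])
  \<comment> \<open>\<open>I (A : I) \<subseteq> W\<close>, because \<open>j \<in> A : I\<close> gives \<open>b j \<in> denom_ideal A x\<close> and \<open>a j = (b j) x\<close>\<close>
  have IC: "i * j \<in> W" if i: "i \<in> I" and j: "j \<in> colon A I" for i j
  proof -
    have "j * a \<in> A" "j * b \<in> A"
      using j mod_span_gen[OF A] unfolding colon_def I_def by auto
    then have jb: "j * b \<in> denom_ideal A x"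
      using b0 by (simp add: denom_ideal_def x)
    have aj: "a * j = 0 + (j * b) * x" and bj: "b * j = j * b + 0 * x"
      using b0 by (simp_all add: x)
    have "a * j \<in> W" unfolding aj by (rule mem[OF ideal_0[OF D] jb])
    moreover have "b * j \<in> W" unfolding bj by (rule mem[OF jb ideal_0[OF D]])
    moreover have "is_submodule A {i. i * j \<in> W}"
      using W unfolding is_submodule_def by (simp add: distrib_right mult.assoc)
    ultimately have "I \<subseteq> {i. i * j \<in> W}"
      unfolding I_def by (intro mod_span_least) auto
    with i show ?thesis by blast
  qed
  have "A = frac_mult A I (colon A I)"
    using PA a b b0 unfolding pruefer_def invertible_ideal_def I_def by auto
  also have "\<dots> \<subseteq> W"
    unfolding frac_mult_def using IC by (intro mod_span_least[OF W]) auto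
  finally have "1 \<in> W" using subring_1[OF A] by blast
  then obtain d e where "1 = d + e * x" "d \<in> denom_ideal A x" "e \<in> denom_ideal A x"
    unfolding W_def by blast
  then show ?thesis by auto
qed

lemma not_in_localization_prime_multiple:
  assumes FA: "frac_field_of A" and PA: "pruefer A" and P: "prime_ideal A P"
    and nl: "\<not> in_localization A P x"
  shows "\<exists>q\<in>P. q * x \<in> A \<and> q * x \<notin> P"
proof -
  have PI: "is_ideal A P" using P by (simp add: prime_ideal_def)
  obtain d e where d: "d \<in> denom_ideal A x" and e: "e \<in> denom_ideal A x" and de: "d + e * x = 1"
    using pruefer_denom_ideal_decomposition[OF FA PA] by blast
  have "d \<in> P" "e \<in> P" using nl d e by (auto simp: in_localization_iff_denom_ideal)
  moreover have "e * x \<notin> P"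
  proof
    assume "e * x \<in> P"
    then have "1 \<in> P" using ideal_add[OF PI \<open>d \<in> P\<close>] de by metis
    then show False using P by (simp add: prime_ideal_def)
  qed
  ultimately show ?thesis using e by (auto simp: denom_ideal_def)
qed

lemma not_in_localization_power_diff:
  assumes FA: "frac_field_of A" and PA: "pruefer A" and P: "prime_ideal A P"
    and nl: "\<not> in_localization A P z" and k: "0 < k" and kl: "k < l"
  shows "\<not> in_localization A P (z ^ l - z ^ k)"
proof
  have A: "is_subring A" using FA by (simp add: frac_field_of_def)
  have PI: "is_ideal A P" using P by (simp add: prime_ideal_def)
  obtain q where q: "q \<in> P" "q * z \<in> A" "q * z \<notin> P"
    using not_in_localization_prime_multiple[OF FA PA P nl] by blast
  have qA: "q \<in> A" using ideal_subset[OF PI q(1)] .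
  have qpow: "q ^ m \<in> P" if "0 < m" for m
    using ideal_power_mono[OF A PI qA, of 1 m] q(1) that by simp
  assume "in_localization A P (z ^ l - z ^ k)"
  then obtain s where s: "s \<in> A" "s \<notin> P" "s * (z ^ l - z ^ k) \<in> A"
    by (auto simp: in_localization_def)
  have "q ^ l = q ^ k * q ^ (l - k)" using kl by (simp flip: power_add)
  then have "s * (q * z) ^ l = q ^ l * (s * (z ^ l - z ^ k)) + (s * (q * z) ^ k) * q ^ (l - k)"
    by (simp add: algebra_simps power_mult_distrib)
  also have "\<dots> \<in> P"
    using ideal_mult_right[OF PI s(3) qpow] ideal_mult_left[OF PI _ qpow] kl k
      subring_mult[OF A s(1) subring_power[OF A q(2)]] ideal_add[OF PI] by simp
  finally show False
    using prime_ideal_mult_notin[OF P s(1) subring_power[OF A q(2)] s(2) prime_ideal_power_notin[OF A P q(2,3)]]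
    by blast
qed

lemma in_localization_add_power_unique:
  assumes FA: "frac_field_of A" and PA: "pruefer A" and P: "prime_ideal A P"
    and nl: "\<not> in_localization A P y \<or> \<not> in_localization A P z"
    and k: "0 < k" and l: "0 < l"
    and yk: "in_localization A P (y + z ^ k)" and yl: "in_localization A P (y + z ^ l)"
  shows "k = l"
proof -
  have A: "is_subring A" using FA by (simp add: frac_field_of_def)
  note L = subring_localization[OF A P]
  show ?thesis
  proof (cases "in_localization A P z")
    case True
    then have "in_localization A P ((y + z ^ k) - z ^ k)"
      using subring_diff[OF L] subring_power[OF L] yk by blast
    with nl True show ?thesis by simp
  next
    case False
    have "\<not> in_localization A P ((y + z ^ l) - (y + z ^ k))" if "k < l"
      using not_in_localization_power_diff[OF FA PA P False k that] by simp
    moreover have "\<not> in_localization A P ((y + z ^ k) - (y + z ^ l))" if "l < k"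
      using not_in_localization_power_diff[OF FA PA P False l that] by simp
    ultimately show ?thesis
      using subring_diff[OF L] yk yl by (metis mem_Collect_eq linorder_cases)
  qed
qed

lemma exists_add_power_not_in_localization:
  assumes FA: "frac_field_of A" and PA: "pruefer A" and N: "noetherian_spectrum A"
  shows "\<exists>k>0. \<forall>Q. prime_ideal A Q \<and> (\<not> in_localization A Q y \<or> \<not> in_localization A Q z)
                  \<longrightarrow> \<not> in_localization A Q (y + z ^ k)"
proof -
  have A: "is_subring A" using FA by (simp add: frac_field_of_def)
  let ?I = "denom_ideal A y \<inter> denom_ideal A z"
  have "is_ideal A ?I" using ideal_Int denom_ideal_ideal[OF A] by blast
  then obtain Ps where Ps: "finite Ps" "\<forall>P\<in>Ps. prime_ideal A P \<and> ?I \<subseteq> P"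
    and minimal: "\<forall>Q. prime_ideal A Q \<and> ?I \<subseteq> Q \<longrightarrow> (\<exists>P\<in>Ps. P \<subseteq> Q)"
    using finite_minimal_primes[OF A N] by metis
  \<comment> \<open>each minimal prime excludes at most one exponent\<close>
  define bad where "bad = (\<Union>P\<in>Ps. {k. 0 < k \<and> in_localization A P (y + z ^ k)})"
  have "finite {k. 0 < k \<and> in_localization A P (y + z ^ k)}" if P: "P \<in> Ps" for P
  proof (cases "{k. 0 < k \<and> in_localization A P (y + z ^ k)} = {}")
    case False
    then obtain k where k: "0 < k" "in_localization A P (y + z ^ k)" by blast
    have prime: "prime_ideal A P" and "?I \<subseteq> P" using Ps(2) P by auto
    then have "\<not> in_localization A P y \<or> \<not> in_localization A P z"
      using Int_denom_ideal_subset_prime_iff[OF A] by blast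
    then have "{k. 0 < k \<and> in_localization A P (y + z ^ k)} \<subseteq> {k}"
      using in_localization_add_power_unique[OF FA PA prime _ k(1) _ k(2)] by auto
    then show ?thesis using finite_subset by blast
  qed (metis finite.emptyI)
  then have "finite (insert 0 bad)"
    unfolding bad_def by (simp add: Ps(1))
  then obtain k where k: "k \<notin> insert 0 bad"
    using ex_new_if_finite[OF infinite_UNIV_nat] by blast
  have "\<not> in_localization A Q (y + z ^ k)"
    if Q: "prime_ideal A Q" "\<not> in_localization A Q y \<or> \<not> in_localization A Q z" for Q
  proof -
    have "?I \<subseteq> Q" using Int_denom_ideal_subset_prime_iff[OF A Q(1)] Q(2) by blast
    then obtain P where P: "P \<in> Ps" "P \<subseteq> Q" using minimal Q(1) by blast
    then have "\<not> in_localization A P (y + z ^ k)" using k unfolding bad_def by auto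
    then show ?thesis using in_localization_antimono[OF P(2)] by blast
  qed
  moreover have "0 < k" using k by simp
  ultimately show ?thesis by blast
qed

section \<open>Finitely generated overrings\<close>

lemma exists_common_nonlocal_element:
  assumes FA: "frac_field_of A" and PA: "pruefer A" and N: "noetherian_spectrum A"
    and B: "is_subring B" and G: "finite G" "G \<subseteq> B"
  shows "\<exists>b\<in>B. \<forall>Q. prime_ideal A Q \<and> (\<exists>y\<in>G. \<not> in_localization A Q y) \<longrightarrow> \<not> in_localization A Q b"
  using G
proof (induction G rule: finite_induct)
  case empty
  then show ?case using subring_0[OF B] by blast
next
  case (insert y G)
  then obtain b where b: "b \<in> B"
    and nonlocal: "\<forall>Q. prime_ideal A Q \<and> (\<exists>y\<in>G. \<not> in_localization A Q y) \<longrightarrow> \<not> in_localization A Q b"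
    by blast
  obtain k where "\<forall>Q. prime_ideal A Q \<and> (\<not> in_localization A Q b \<or> \<not> in_localization A Q y)
                    \<longrightarrow> \<not> in_localization A Q (b + y ^ k)"
    using exists_add_power_not_in_localization[OF FA PA N] by blast
  moreover have "b + y ^ k \<in> B" using subring_add[OF B b subring_power[OF B]] insert.prems by blast
  ultimately show ?case using nonlocal by blast
qed

lemma fin_gen_overring_nonlocal_witness:
  assumes FA: "frac_field_of A" and PA: "pruefer A" and N: "noetherian_spectrum A"
    and ov: "is_overring A B" and fg: "fin_gen_algebra A B"
  shows "\<exists>b\<in>B. \<forall>Q x. prime_ideal A Q \<and> x \<in> B \<and> \<not> in_localization A Q x \<longrightarrow> \<not> in_localization A Q b"
proof -
  have A: "is_subring A" using FA by (simp add: frac_field_of_def)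
  have B: "is_subring B" using ov by (simp add: is_overring_def)
  obtain F where F: "finite F" "F \<subseteq> B" and B_eq: "B = ring_gen (A \<union> F)"
    using fg by (auto simp: fin_gen_algebra_def)
  obtain b where b: "b \<in> B"
    and nonlocal: "\<forall>Q. prime_ideal A Q \<and> (\<exists>y\<in>F. \<not> in_localization A Q y) \<longrightarrow> \<not> in_localization A Q b"
    using exists_common_nonlocal_element[OF FA PA N B F] by blast
  have "\<exists>y\<in>F. \<not> in_localization A Q y"
    if Q: "prime_ideal A Q" and x: "x \<in> B" "\<not> in_localization A Q x" for Q x
  proof (rule ccontr)
    assume "\<not> ?thesis"
    then have "A \<union> F \<subseteq> {x. in_localization A Q x}"
      using in_localization_of_mem[OF A Q] by auto
    then have "B \<subseteq> {x. in_localization A Q x}"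
      unfolding B_eq by (rule ring_gen_least[OF subring_localization[OF A Q]])
    with x show False by blast
  qed
  with b nonlocal show ?thesis by blast
qed

(* i.e. u lies in the maximal ideal of A_P *)
lemma factor_of_nonlocal_power_in_prime:
  assumes FA: "frac_field_of A" and PA: "pruefer A" and P: "prime_ideal A P"
    and nl: "\<not> in_localization A P b" and n: "0 < n" and ub: "u * b ^ n \<in> A"
    and s: "s \<in> denom_ideal A u"
  shows "s * u \<in> P"
proof (rule ccontr)
  assume su: "s * u \<notin> P"
  have A: "is_subring A" using FA by (simp add: frac_field_of_def)
  have PI: "is_ideal A P" using P by (simp add: prime_ideal_def)
  obtain q where q: "q \<in> P" "q * b \<in> A" "q * b \<notin> P"
    using not_in_localization_prime_multiple[OF FA PA P nl] by blast
  have "q ^ n \<in> P"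
    using ideal_power_mono[OF A PI ideal_subset[OF PI q(1)], of 1 n] q(1) n by simp
  then have "(s * q ^ n) * (u * b ^ n) \<in> P"
    using s ideal_mult_right[OF PI ub] ideal_mult_left[OF PI] by (auto simp: denom_ideal_def)
  moreover have "(s * q ^ n) * (u * b ^ n) = (s * u) * (q * b) ^ n"
    by (simp add: algebra_simps power_mult_distrib)
  moreover have "(s * u) * (q * b) ^ n \<notin> P"
    using prime_ideal_mult_notin[OF P _ subring_power[OF A q(2)] su prime_ideal_power_notin[OF A P q(2,3)]] s
    by (simp add: denom_ideal_def)
  ultimately show False by simp
qed

lemma mem_if_mult_power_mem:
  assumes FA: "frac_field_of A" and PA: "pruefer A" and N: "noetherian_spectrum A"
    and dom: "\<And>Q. prime_ideal A Q \<Longrightarrow> \<not> in_localization A Q u \<Longrightarrow> \<not> in_localization A Q b"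
    and n: "0 < n" and ub: "u * b ^ n \<in> A"
  shows "u \<in> A"
proof (rule ccontr)
  have A: "is_subring A" using FA by (simp add: frac_field_of_def)
  assume "u \<notin> A"
  then have "\<forall>k. (1::'a) ^ k \<notin> denom_ideal A u" by (simp add: denom_ideal_def)
  then obtain P where P: "prime_ideal A P" "denom_ideal A u \<subseteq> P"
    using prime_ideal_avoiding[OF A N denom_ideal_ideal[OF A] subring_1[OF A]] by blast
  then have nl: "\<not> in_localization A P u" by (simp add: in_localization_iff_denom_ideal)
  then obtain q where q: "q \<in> P" "q * u \<in> A" "q * u \<notin> P"
    using not_in_localization_prime_multiple[OF FA PA P(1)] by blast
  then have "q \<in> denom_ideal A u"
    using P(1) by (auto simp: denom_ideal_def prime_ideal_def is_ideal_def)
  then have "q * u \<in> P"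
    using factor_of_nonlocal_power_in_prime[OF FA PA P(1) dom[OF P(1) nl] n ub] by blast
  with q(3) show False ..
qed

lemma power_mult_mem_if_mult_power_mem:
  assumes FA: "frac_field_of A" and PA: "pruefer A" and N: "noetherian_spectrum A"
    and uA: "u \<in> A"
    and dom: "\<And>Q. prime_ideal A Q \<Longrightarrow> \<not> in_localization A Q x \<Longrightarrow> \<not> in_localization A Q b"
    and n: "0 < n" and ub: "u * b ^ n \<in> A"
  shows "\<exists>k. u ^ k * x \<in> A"
proof (rule ccontr)
  have A: "is_subring A" using FA by (simp add: frac_field_of_def)
  assume "\<nexists>k. u ^ k * x \<in> A"
  then have "\<forall>k. u ^ k \<notin> denom_ideal A x" by (simp add: denom_ideal_def)
  then obtain P where P: "prime_ideal A P" "denom_ideal A x \<subseteq> P" "u \<notin> P"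
    using prime_ideal_avoiding[OF A N denom_ideal_ideal[OF A] uA] by blast
  then have "\<not> in_localization A P x" by (simp add: in_localization_iff_denom_ideal)
  moreover have "1 \<in> denom_ideal A u" using uA subring_1[OF A] by (simp add: denom_ideal_def)
  ultimately have "1 * u \<in> P"
    using factor_of_nonlocal_power_in_prime[OF FA PA P(1) dom[OF P(1)] n ub] by blast
  with P(3) show False by simp
qed

lemma almost_well_centered_imp_localization:
  assumes FA: "frac_field_of A" and PA: "pruefer A" and N: "noetherian_spectrum A"
    and ov: "is_overring A B" and fg: "fin_gen_algebra A B" and AW: "almost_well_centered A B"
  shows "is_localization A B"
proof -
  have A: "is_subring A" using FA by (simp add: frac_field_of_def)
  have B: "is_subring B" and AB: "A \<subseteq> B" using ov by (auto simp: is_overring_def)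
  obtain b where "b \<in> B"
    and dom: "\<And>Q x. prime_ideal A Q \<Longrightarrow> x \<in> B \<Longrightarrow> \<not> in_localization A Q x \<Longrightarrow> \<not> in_localization A Q b"
    using fin_gen_overring_nonlocal_witness[OF FA PA N ov fg] by blast
  then obtain n u where n: "0 < n" and u: "ring_unit B u" and ub: "u * b ^ n \<in> A"
    using AW unfolding almost_well_centered_def by blast
  have uB: "u \<in> B" "inverse u \<in> B" and u0: "u \<noteq> 0" using u by (auto simp: ring_unit_def)
  have uA: "u \<in> A" using mem_if_mult_power_mem[OF FA PA N dom[OF _ uB(1)] n ub] .
  have "\<exists>t\<in>A. t \<noteq> 0 \<and> inverse t \<in> B \<and> t * x \<in> A" if x: "x \<in> B" for x
  proof -
    obtain k where "u ^ k * x \<in> A"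
      using power_mult_mem_if_mult_power_mem[OF FA PA N uA dom[OF _ x] n ub] by blast
    moreover have "inverse (u ^ k) \<in> B"
      using subring_power[OF B uB(2)] by (simp add: power_inverse)
    moreover have "u ^ k \<in> A" "u ^ k \<noteq> 0" using subring_power[OF A uA] u0 by simp_all
    ultimately show ?thesis by blast
  qed
  then show ?thesis using localization_if_invertible_denominators[OF A B AB] by blast
qed

theorem theorem4p5:
  fixes A B :: "'k::field set"
  assumes "frac_field_of A"
    and "pruefer A"
    and "noetherian_spectrum A"
    and "is_overring A B"
    and "fin_gen_algebra A B"
  shows "(is_localization A B \<longleftrightarrow> well_centered A B)
       \<and> (well_centered A B \<longleftrightarrow> almost_well_centered A B)"
proof -
  have "is_subring A" using assms(1) by (simp add: frac_field_of_def)
  then show ?thesis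
    using localization_imp_well_centered well_centered_imp_almost_well_centered
      almost_well_centered_imp_localization[OF assms] by blast
qed

end
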